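(* In the directed polymer model described in the context, the function $p:[0,1)\to\mathbb{R}$, $p(\beta)=\lim_{N\to\infty}\frac1N\log Z_N^{\beta,\omega}$, is continuous and non-increasing.
   Context: Let $S=(S_n)_{n\ge0}$ be the simple symmetric random walk on $\mathbb{Z}^d$ ($d\ge1$) started at $0$, with law $\mathbf{P}$ and expectation $\mathbf{E}$. Independently, let $\omega=\{\omega_{n,z}:n\in\mathbb{N},z\in\mathbb{Z}^d\}$ be an i.i.d. family (law $\mathbb{P}$, expectation $\mathbb{E}$) such that $\omega_{0,0}\ge -1$ a.s., $\mathbb{E}[\omega_{0,0}]=0$, and $\mathbb{P}[\omega_{0,0}>x]\sim C_{\mathbb{P}}x^{-\gamma}$ as $x\to\infty$ for some constant $C_{\mathbb{P}}>0$ and $\gamma\in(1,2)$. For $\beta\in[0,1)$ and $N\in\mathbb{N}$, $Z_N^{\beta,\omega}:=\mathbf{E}\big[\prod_{n=1}^N(1+\beta\omega_{n,S_n})\big]$; the limit $p(\beta)=\lim_{N\to\infty}\frac1N\log Z_N^{\beta,\omega}$ exists $\mathbb{P}$-a.s. and is deterministic. *)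

theory Defs
  imports "HOL-Probability.Probability" "HOL-Library.Landau_Symbols"
begin

definition srw_steps :: "(int ^ 'd) set" where
  "srw_steps = {v. \<exists>i. v = axis i 1 \<or> v = axis i (-1)}"

text \<open>Partition function: the expectation over the simple symmetric random walk
  started at 0 (uniform over the (2d)^N step sequences of length N),
  S_n = sum of the first n steps.\<close>
definition polymer_Z :: "nat \<Rightarrow> real \<Rightarrow> (nat \<Rightarrow> int ^ 'd \<Rightarrow> real) \<Rightarrow> real" where
  "polymer_Z N \<beta> w =
     (\<Sum>xs\<in>{xs. length xs = N \<and> set xs \<subseteq> (srw_steps :: (int ^ 'd) set)}.
        (\<Prod>n\<in>{1..N}. 1 + \<beta> * w n (sum_list (take n xs))))
     / (2 * real CARD('d)) ^ N"

end

theory Submission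
  imports Defs
begin

(* For fixed N the mean E ln Z_N(beta) is non-increasing in beta. Indeed Z_N is affine in the
   environment at any single site i, of the form A + B (1 + beta omega_i) with A, B >= 0 not
   depending on omega_i; since E omega_i = 0, concavity of ln and Jensen's inequality show that
   t |-> E ln (A + B (1 + t omega_i)) is non-increasing. Raising the temperature one visited site
   at a time, and integrating out that site first by Fubini, gives the claim.
   The almost sure limits p(beta) inherit this monotonicity: ln Z_N / N is bounded below by
   ln (1 - beta) - ln (2d), and its excess over a level K is at most exp (- N K) Z_N, whose mean
   is at most exp (- K) because E Z_N = 1.
   Continuity follows from the pathwise bound Z_N(b) >= ((1 - b) / (1 - a))^N Z_N(a) for a <= b,
   which gives 0 <= p(a) - p(b) <= ln (1 - a) - ln (1 - b). *)

section \<open>Logarithms of perturbed random variables\<close>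

lemma integrable_ln_of_ge:
  fixes f :: "'a \<Rightarrow> real"
  assumes "finite_measure M" and f: "integrable M f"
    and m: "0 < m" "\<And>x. x \<in> space M \<Longrightarrow> m \<le> f x"
  shows "integrable M (\<lambda>x. ln (f x))"
proof (rule Bochner_Integration.integrable_bound)
  interpret finite_measure M by fact
  show "integrable M (\<lambda>x. \<bar>ln m\<bar> + \<bar>f x\<bar>)"
    using f by auto
  show "(\<lambda>x. ln (f x)) \<in> borel_measurable M"
    using f by measurable
  show "AE x in M. norm (ln (f x)) \<le> norm (\<bar>ln m\<bar> + \<bar>f x\<bar>)"
  proof (rule AE_I2)
    fix x assume "x \<in> space M"
    with m have "m \<le> f x" "0 < f x"
      by force+
    with m have "ln m \<le> ln (f x)"
      by simp
    moreover have "ln (f x) \<le> f x - 1"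
      using \<open>0 < f x\<close> by (rule ln_le_minus_one)
    ultimately show "norm (ln (f x)) \<le> norm (\<bar>ln m\<bar> + \<bar>f x\<bar>)"
      by auto
  qed
qed

lemma integrable_ln_perturbation:
  fixes h :: "'a \<Rightarrow> real"
  assumes "finite_measure \<mu>" and h: "integrable \<mu> h" and h_ge: "\<And>v. - c \<le> h v"
    and c: "0 < c" and r: "0 \<le> r" "r < 1"
  shows "integrable \<mu> (\<lambda>v. ln (c + r * h v))"
proof -
  interpret finite_measure \<mu> by fact
  show ?thesis
  proof (rule integrable_ln_of_ge)
    show "0 < (1 - r) * c"
      using r c by simp
    show "(1 - r) * c \<le> c + r * h v" for v
      using mult_left_mono[OF h_ge r(1), of v] by (simp add: algebra_simps)
  qed (use h finite_measure_axioms in auto)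
qed

lemma integral_ln_le_ln_integral:
  fixes Y :: "'a \<Rightarrow> real"
  assumes "prob_space \<mu>" and "integrable \<mu> Y" "\<And>v. 0 < Y v" and "integrable \<mu> (\<lambda>v. ln (Y v))"
  shows "(\<integral>v. ln (Y v) \<partial>\<mu>) \<le> ln (\<integral>v. Y v \<partial>\<mu>)"
proof -
  interpret prob_space \<mu> by fact
  have "- ln (\<integral>v. Y v \<partial>\<mu>) \<le> (\<integral>v. - ln (Y v) \<partial>\<mu>)"
    using assms ln_concave by (intro jensens_inequality[where I = "{0<..}"]) (auto simp: concave_on_def)
  then show ?thesis
    by simp
qed

text \<open>The mixture \<open>c + s h\<close> interpolates between the constant \<open>c = E (c + t h)\<close> and
  \<open>c + t h\<close>; concavity of \<open>ln\<close> together with Jensen's inequality \<open>E ln (c + t h) \<le> ln c\<close>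
  places \<open>E ln (c + s h)\<close> above \<open>E ln (c + t h)\<close>.\<close>
lemma integral_ln_mean_zero_perturbation_antimono:
  fixes h :: "'a \<Rightarrow> real"
  assumes "prob_space \<mu>" and h: "integrable \<mu> h" "(\<integral>v. h v \<partial>\<mu>) = 0"
    and h_ge: "\<And>v. - c \<le> h v" and c: "0 < c" and st: "0 \<le> s" "s \<le> t" "t < 1"
  shows "(\<integral>v. ln (c + t * h v) \<partial>\<mu>) \<le> (\<integral>v. ln (c + s * h v) \<partial>\<mu>)"
proof -
  interpret prob_space \<mu> by fact
  have integrable_ln: "integrable \<mu> (\<lambda>v. ln (c + r * h v))" if "0 \<le> r" "r < 1" for r
    using finite_measure_axioms h(1) h_ge c that by (rule integrable_ln_perturbation)
  show ?thesis
  proof (cases "t = 0")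
    case True
    with st show ?thesis by simp
  next
    case False
    define Y where "Y v = c + t * h v" for v
    have Y_pos: "0 < Y v" for v
    proof -
      have "0 < (1 - t) * c" "t * (- c) \<le> t * h v"
        using st c mult_left_mono[OF h_ge[of v], of t] by simp_all
      then show ?thesis
        by (simp add: Y_def algebra_simps)
    qed
    have "(\<integral>v. ln (Y v) \<partial>\<mu>) \<le> ln (\<integral>v. Y v \<partial>\<mu>)"
      using h(1) Y_pos integrable_ln[of t] st
      by (intro integral_ln_le_ln_integral[OF prob_space_axioms]) (auto simp: Y_def)
    also have "(\<integral>v. Y v \<partial>\<mu>) = c"
      using h by (simp add: Y_def prob_space)
    finally have jensen: "(\<integral>v. ln (Y v) \<partial>\<mu>) \<le> ln c" .
    define \<tau> where "\<tau> = s / t"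
    have \<tau>: "0 \<le> \<tau>" "\<tau> \<le> 1"
      using st False by (auto simp: \<tau>_def)
    have mixture: "c + s * h v = (1 - \<tau>) * c + \<tau> * Y v" for v
      using False by (simp add: \<tau>_def Y_def field_simps)
    have "(\<integral>v. ln (Y v) \<partial>\<mu>) \<le> (1 - \<tau>) * ln c + \<tau> * (\<integral>v. ln (Y v) \<partial>\<mu>)"
      using mult_left_mono[OF jensen, of "1 - \<tau>"] \<tau> by (simp add: algebra_simps)
    also have "\<dots> = (\<integral>v. (1 - \<tau>) * ln c + \<tau> * ln (Y v) \<partial>\<mu>)"
      using integrable_ln[of t] st by (simp add: Y_def prob_space)
    also have "\<dots> \<le> (\<integral>v. ln (c + s * h v) \<partial>\<mu>)"
    proof (rule integral_mono)
      show "integrable \<mu> (\<lambda>v. (1 - \<tau>) * ln c + \<tau> * ln (Y v))"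
        using integrable_ln[of t] st by (simp add: Y_def)
      show "integrable \<mu> (\<lambda>v. ln (c + s * h v))"
        using st by (intro integrable_ln) auto
      fix v
      show "(1 - \<tau>) * ln c + \<tau> * ln (Y v) \<le> ln (c + s * h v)"
        using concave_onD[OF ln_concave, of \<tau> c "Y v"] \<tau> c Y_pos[of v]
        by (simp add: mixture)
    qed
    finally show ?thesis
      by (simp add: Y_def)
  qed
qed

section \<open>Partition functions with site-dependent temperatures\<close>

text \<open>A partition function over an abstract set \<open>K\<close> of paths: path \<open>k\<close> has a priori
  weight \<open>c k\<close> and visits the sites \<open>P k\<close>, and site \<open>i\<close> carries its own inverse temperature
  \<open>s i\<close>. The environment \<open>y\<close> is clipped at \<open>-1\<close>, so that all factors are nonnegative
  for every \<open>y\<close> and not only almost surely.\<close>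
definition polymer_sum ::
    "'k set \<Rightarrow> ('k \<Rightarrow> 'i set) \<Rightarrow> ('k \<Rightarrow> real) \<Rightarrow> ('i \<Rightarrow> real) \<Rightarrow> ('i \<Rightarrow> real) \<Rightarrow> real" where
  "polymer_sum K P c s y = (\<Sum>k\<in>K. c k * (\<Prod>i\<in>P k. 1 + s i * max (y i) (-1)))"

lemma borel_measurable_polymer_sum:
  assumes "\<And>i. i \<in> I \<Longrightarrow> (\<lambda>y. y i) \<in> borel_measurable N" and "\<And>k. k \<in> K \<Longrightarrow> P k \<subseteq> I"
  shows "polymer_sum K P c s \<in> borel_measurable N"
  unfolding polymer_sum_def
proof (intro borel_measurable_sum borel_measurable_times borel_measurable_const
    borel_measurable_prod borel_measurable_add borel_measurable_max)
  fix k i assume "k \<in> K" "i \<in> P k"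
  with assms show "(\<lambda>y. y i) \<in> borel_measurable N"
    by auto
qed

lemma polymer_sum_ge:
  assumes s: "\<And>i. 0 \<le> s i" "\<And>i. s i \<le> 1" and c: "\<And>k. k \<in> K \<Longrightarrow> 0 \<le> c k"
  shows "(\<Sum>k\<in>K. c k * (\<Prod>i\<in>P k. 1 - s i)) \<le> polymer_sum K P c s y"
  unfolding polymer_sum_def
proof (intro sum_mono mult_left_mono prod_mono conjI)
  fix i
  show "0 \<le> 1 - s i"
    using s(2)[of i] by simp
  show "1 - s i \<le> 1 + s i * max (y i) (-1)"
    using mult_left_mono[OF _ s(1)[of i], of "-1" "max (y i) (-1)"] by simp
qed (use c in auto)

lemma polymer_sum_nonneg:
  assumes "\<And>i. 0 \<le> s i" "\<And>i. s i \<le> 1" and "\<And>k. k \<in> K \<Longrightarrow> 0 \<le> c k"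
  shows "0 \<le> polymer_sum K P c s y"
proof -
  have "0 \<le> (\<Sum>k\<in>K. c k * (\<Prod>i\<in>P k. 1 - s i))"
    using assms by (intro sum_nonneg mult_nonneg_nonneg prod_nonneg) auto
  also have "\<dots> \<le> polymer_sum K P c s y"
    using assms by (rule polymer_sum_ge)
  finally show ?thesis .
qed

lemma polymer_sum_lower_bound_pos:
  fixes s :: "'i \<Rightarrow> real" and c :: "'k \<Rightarrow> real"
  assumes "\<And>i. s i < 1" and "\<And>k. k \<in> K \<Longrightarrow> 0 < c k" and "finite K" "K \<noteq> {}"
  shows "0 < (\<Sum>k\<in>K. c k * (\<Prod>i\<in>P k. 1 - s i))"
proof (rule ordered_comm_monoid_add_class.sum_pos)
  fix k assume "k \<in> K"
  have "0 < (\<Prod>i\<in>P k. 1 - s i)"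
    using assms(1) by (intro prod_pos) (simp add: algebra_simps)
  with assms(2)[OF \<open>k \<in> K\<close>] show "0 < c k * (\<Prod>i\<in>P k. 1 - s i)"
    by simp
qed (use assms in auto)

lemma polymer_sum_update_site:
  assumes "finite K" and "\<And>k. k \<in> K \<Longrightarrow> finite (P k)"
  shows "polymer_sum K P c (s(j := t)) (y(j := v)) =
    polymer_sum {k \<in> K. j \<notin> P k} P c s y +
    polymer_sum {k \<in> K. j \<in> P k} (\<lambda>k. P k - {j}) c s y * (1 + t * max v (-1))"
proof -
  let ?f = "\<lambda>s y k. c k * (\<Prod>i\<in>P k. 1 + s i * max (y i) (-1))"
  have split: "polymer_sum K P c s' y' =
      sum (?f s' y') {k \<in> K. j \<notin> P k} + sum (?f s' y') {k \<in> K. j \<in> P k}" for s' y'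
    unfolding polymer_sum_def using assms(1)
    by (subst sum.union_disjoint[symmetric]) (auto intro: sum.cong)
  have avoiding: "?f (s(j := t)) (y(j := v)) k = ?f s y k" if "j \<notin> P k" for k
    using that by (auto intro!: prod.cong)
  have through: "?f (s(j := t)) (y(j := v)) k =
      c k * (\<Prod>i\<in>P k - {j}. 1 + s i * max (y i) (-1)) * (1 + t * max v (-1))"
    if "k \<in> K" "j \<in> P k" for k
  proof -
    have "(\<Prod>i\<in>P k - {j}. 1 + (s(j := t)) i * max ((y(j := v)) i) (-1)) =
        (\<Prod>i\<in>P k - {j}. 1 + s i * max (y i) (-1))"
      by (intro prod.cong) auto
    then show ?thesis
      using that assms(2)[OF that(1)] by (simp add: prod.remove[of "P k" j])
  qed
  have "polymer_sum K P c (s(j := t)) (y(j := v)) =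
      sum (?f (s(j := t)) (y(j := v))) {k \<in> K. j \<notin> P k} +
      sum (?f (s(j := t)) (y(j := v))) {k \<in> K. j \<in> P k}"
    by (rule split)
  also have "sum (?f (s(j := t)) (y(j := v))) {k \<in> K. j \<notin> P k} =
      polymer_sum {k \<in> K. j \<notin> P k} P c s y"
    unfolding polymer_sum_def using avoiding by (intro sum.cong) auto
  also have "sum (?f (s(j := t)) (y(j := v))) {k \<in> K. j \<in> P k} =
      polymer_sum {k \<in> K. j \<in> P k} (\<lambda>k. P k - {j}) c s y * (1 + t * max v (-1))"
    unfolding polymer_sum_def sum_distrib_right using through by (intro sum.cong) auto
  finally show ?thesis .
qed

locale product_polymer =
  fixes \<mu> :: "real measure" and I :: "'i set"
    and K :: "'k set" and P :: "'k \<Rightarrow> 'i set" and c :: "'k \<Rightarrow> real"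
  assumes prob_space_site: "prob_space \<mu>"
    and integrable_clipped: "integrable \<mu> (\<lambda>v. max v (-1))"
    and integral_clipped: "(\<integral>v. max v (-1) \<partial>\<mu>) = 0"
    and finite_sites: "finite I"
    and finite_paths: "finite K" and paths_nonempty: "K \<noteq> {}"
    and path_sites_subset: "\<And>k. k \<in> K \<Longrightarrow> P k \<subseteq> I"
    and weights_pos: "\<And>k. k \<in> K \<Longrightarrow> 0 < c k"
begin

abbreviation product_law :: "('i \<Rightarrow> real) measure" where
  "product_law \<equiv> PiM I (\<lambda>_. \<mu>)"

lemma prob_space_product_law: "prob_space product_law"
  using prob_space_site by (intro prob_space_PiM) auto

lemma product_sigma_finite_site: "product_sigma_finite (\<lambda>_. \<mu>)"
  unfolding product_sigma_finite_def using prob_space_imp_sigma_finite[OF prob_space_site] by auto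

lemma finite_path_sites: "k \<in> K \<Longrightarrow> finite (P k)"
  using path_sites_subset finite_sites finite_subset by blast

text \<open>Each path contributes its weight: the factors of different sites are independent with
  mean \<open>1\<close>.\<close>
lemma
  shows integrable_polymer_sum: "integrable product_law (polymer_sum K P c s)"
    and integral_polymer_sum: "(\<integral>y. polymer_sum K P c s y \<partial>product_law) = sum c K"
proof -
  interpret product_sigma_finite "\<lambda>_. \<mu>"
    by (rule product_sigma_finite_site)
  interpret prob_space \<mu>
    by (rule prob_space_site)
  define f where "f k i v = (if i \<in> P k then 1 + s i * max v (-1) else 1)" for k i v
  have integrable_f: "integrable \<mu> (f k i)" for k i
    unfolding f_def using integrable_clipped by (cases "i \<in> P k") auto
  have integral_f: "integral\<^sup>L \<mu> (f k i) = 1" for k i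
    unfolding f_def using integrable_clipped integral_clipped by (cases "i \<in> P k") (auto simp: prob_space)
  have factorized: "polymer_sum K P c s = (\<lambda>y. \<Sum>k\<in>K. c k * (\<Prod>i\<in>I. f k i (y i)))"
    unfolding polymer_sum_def f_def using path_sites_subset finite_sites
    by (intro ext sum.cong refl arg_cong2[where f = "(*)"])
      (simp add: prod.If_cases Int_absorb1)
  have integrable_prod: "integrable product_law (\<lambda>y. \<Prod>i\<in>I. f k i (y i))" for k
    by (rule product_integrable_prod[OF finite_sites integrable_f])
  have integral_prod: "(\<integral>y. (\<Prod>i\<in>I. f k i (y i)) \<partial>product_law) = 1" for k
    by (simp add: product_integral_prod[OF finite_sites integrable_f] integral_f)
  show "integrable product_law (polymer_sum K P c s)"
    unfolding factorized using integrable_prod by auto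
  show "(\<integral>y. polymer_sum K P c s y \<partial>product_law) = sum c K"
    unfolding factorized using integrable_prod by (simp add: integral_prod)
qed

lemma integrable_ln_polymer_sum:
  assumes "\<And>i. 0 \<le> s i" "\<And>i. s i < 1"
  shows "integrable product_law (\<lambda>y. ln (polymer_sum K P c s y))"
proof (rule integrable_ln_of_ge)
  show "finite_measure product_law"
    using prob_space_product_law by (rule prob_space.axioms)
  show "0 < (\<Sum>k\<in>K. c k * (\<Prod>i\<in>P k. 1 - s i))"
    using assms(2) weights_pos finite_paths paths_nonempty by (rule polymer_sum_lower_bound_pos)
  show "(\<Sum>k\<in>K. c k * (\<Prod>i\<in>P k. 1 - s i)) \<le> polymer_sum K P c s y" for y
    using assms weights_pos by (intro polymer_sum_ge) (auto intro: less_imp_le)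
qed (rule integrable_polymer_sum)

lemma polymer_sum_site_affine:
  assumes s: "\<And>i. 0 \<le> s i" "\<And>i. s i < 1"
  obtains A B where "0 \<le> A" "0 \<le> B" "0 < A + B"
    and "\<And>r v. polymer_sum K P c (s(j := r)) (y(j := v)) = (A + B) + r * (B * max v (-1))"
proof
  let ?A = "polymer_sum {k \<in> K. j \<notin> P k} P c s y"
  let ?B = "polymer_sum {k \<in> K. j \<in> P k} (\<lambda>k. P k - {j}) c s y"
  show affine: "polymer_sum K P c (s(j := r)) (y(j := v)) = (?A + ?B) + r * (?B * max v (-1))" for r v
    by (simp add: polymer_sum_update_site[OF finite_paths finite_path_sites] algebra_simps)
  show "0 \<le> ?A" "0 \<le> ?B"
    using s weights_pos by (auto intro!: polymer_sum_nonneg simp: less_imp_le)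
  have "0 < (\<Sum>k\<in>K. c k * (\<Prod>i\<in>P k. 1 - s i))"
    using s(2) weights_pos finite_paths paths_nonempty by (rule polymer_sum_lower_bound_pos)
  also have "\<dots> \<le> polymer_sum K P c (s(j := s j)) (y(j := 0))"
    using s weights_pos by (auto intro!: polymer_sum_ge simp: less_imp_le)
  also have "\<dots> = ?A + ?B"
    using affine[of "s j" 0] by simp
  finally show "0 < ?A + ?B" .
qed

lemma
  assumes s: "\<And>i. 0 \<le> s i" "\<And>i. s i < 1"
  shows integrable_ln_polymer_sum_site:
      "0 \<le> r \<Longrightarrow> r < 1 \<Longrightarrow> integrable \<mu> (\<lambda>v. ln (polymer_sum K P c (s(j := r)) (y(j := v))))"
    and integral_ln_polymer_sum_site_antimono:
      "s j \<le> t \<Longrightarrow> t < 1 \<Longrightarrow> (\<integral>v. ln (polymer_sum K P c (s(j := t)) (y(j := v))) \<partial>\<mu>) \<le>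
        (\<integral>v. ln (polymer_sum K P c s (y(j := v))) \<partial>\<mu>)"
proof -
  obtain A B where AB: "0 \<le> A" "0 \<le> B" "0 < A + B"
    and affine: "\<And>r v. polymer_sum K P c (s(j := r)) (y(j := v)) = (A + B) + r * (B * max v (-1))"
    using polymer_sum_site_affine[of s j y] s by blast
  have h: "integrable \<mu> (\<lambda>v. B * max v (-1))" "(\<integral>v. B * max v (-1) \<partial>\<mu>) = 0"
    using integrable_clipped integral_clipped by simp_all
  have h_ge: "- (A + B) \<le> B * max v (-1)" for v
    using mult_left_mono[of "-1" "max v (-1)" B] AB by simp
  show "integrable \<mu> (\<lambda>v. ln (polymer_sum K P c (s(j := r)) (y(j := v))))" if "0 \<le> r" "r < 1"
    unfolding affine using prob_space_site h(1) h_ge AB that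
    by (intro integrable_ln_perturbation) (auto intro: prob_space.axioms)
  show "(\<integral>v. ln (polymer_sum K P c (s(j := t)) (y(j := v))) \<partial>\<mu>) \<le>
      (\<integral>v. ln (polymer_sum K P c s (y(j := v))) \<partial>\<mu>)" if "s j \<le> t" "t < 1"
    using integral_ln_mean_zero_perturbation_antimono[OF prob_space_site h h_ge AB(3) s(1) that]
    by (simp add: affine[of t] affine[of "s j", simplified])
qed

text \<open>By Fubini, the environment at \<open>j\<close> can be integrated out first.\<close>
lemma integral_ln_polymer_sum_update_antimono:
  assumes j: "j \<in> I" and s: "\<And>i. 0 \<le> s i" "\<And>i. s i < 1" and t: "s j \<le> t" "t < 1"
  shows "(\<integral>y. ln (polymer_sum K P c (s(j := t)) y) \<partial>product_law) \<le>
    (\<integral>y. ln (polymer_sum K P c s y) \<partial>product_law)"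
proof -
  interpret product_sigma_finite "\<lambda>_. \<mu>"
    by (rule product_sigma_finite_site)
  have s': "\<And>i. 0 \<le> (s(j := t)) i" "\<And>i. (s(j := t)) i < 1"
    using s s(1)[of j] t by (auto intro: order_trans)
  let ?D = "\<lambda>y. ln (polymer_sum K P c s y) - ln (polymer_sum K P c (s(j := t)) y)"
  have integrable_ln: "integrable product_law (\<lambda>y. ln (polymer_sum K P c s y))"
    "integrable product_law (\<lambda>y. ln (polymer_sum K P c (s(j := t)) y))"
    using s s' by (intro integrable_ln_polymer_sum; simp)+
  have "0 \<le> (\<integral>x. (\<integral>v. ?D (x(j := v)) \<partial>\<mu>) \<partial>PiM (I - {j}) (\<lambda>_. \<mu>))"
  proof (rule Bochner_Integration.integral_nonneg)
    fix x :: "'i \<Rightarrow> real"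
    have "(\<integral>v. ?D (x(j := v)) \<partial>\<mu>) =
        (\<integral>v. ln (polymer_sum K P c s (x(j := v))) \<partial>\<mu>) -
        (\<integral>v. ln (polymer_sum K P c (s(j := t)) (x(j := v))) \<partial>\<mu>)"
      using integrable_ln_polymer_sum_site[where s = s and j = j and y = x and r = "s j"]
        integrable_ln_polymer_sum_site[where s = s and j = j and y = x and r = t]
        s t order_trans[OF s(1) t(1)]
      by (subst Bochner_Integration.integral_diff) auto
    with integral_ln_polymer_sum_site_antimono[where s = s and j = j and y = x] s t
    show "0 \<le> (\<integral>v. ?D (x(j := v)) \<partial>\<mu>)"
      by simp
  qed
  also have "\<dots> = (\<integral>y. ?D y \<partial>product_law)"
    using product_integral_insert[of "I - {j}" j ?D] integrable_ln finite_sites j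
    by (simp add: insert_absorb)
  also have "\<dots> = (\<integral>y. ln (polymer_sum K P c s y) \<partial>product_law) -
      (\<integral>y. ln (polymer_sum K P c (s(j := t)) y) \<partial>product_law)"
    using integrable_ln by (rule Bochner_Integration.integral_diff)
  finally show ?thesis
    by simp
qed

lemma integral_ln_polymer_sum_antimono:
  assumes "0 \<le> \<beta>" "\<beta> \<le> \<beta>'" "\<beta>' < 1"
  shows "(\<integral>y. ln (polymer_sum K P c (\<lambda>_. \<beta>') y) \<partial>product_law) \<le>
    (\<integral>y. ln (polymer_sum K P c (\<lambda>_. \<beta>) y) \<partial>product_law)"
proof -
  have raised: "(\<integral>y. ln (polymer_sum K P c (\<lambda>i. if i \<in> J then \<beta>' else \<beta>) y) \<partial>product_law) \<le>
      (\<integral>y. ln (polymer_sum K P c (\<lambda>_. \<beta>) y) \<partial>product_law)" if "finite J" "J \<subseteq> I" for J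
    using that
  proof (induction J rule: finite_induct)
    case (insert j J)
    let ?s = "\<lambda>i. if i \<in> J then \<beta>' else \<beta>"
    have "(\<lambda>i. if i \<in> insert j J then \<beta>' else \<beta>) = ?s(j := \<beta>')"
      by auto
    moreover have "(\<integral>y. ln (polymer_sum K P c (?s(j := \<beta>')) y) \<partial>product_law) \<le>
        (\<integral>y. ln (polymer_sum K P c ?s y) \<partial>product_law)"
      using insert.prems assms by (intro integral_ln_polymer_sum_update_antimono) auto
    ultimately show ?case
      using insert by auto
  qed simp
  have "polymer_sum K P c (\<lambda>_. \<beta>') = polymer_sum K P c (\<lambda>i. if i \<in> I then \<beta>' else \<beta>)"
    using path_sites_subset unfolding polymer_sum_def
    by (intro ext sum.cong refl arg_cong2[where f = "(*)"] prod.cong) auto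
  with raised[OF finite_sites] show ?thesis
    by simp
qed

end

section \<open>Simple random walk paths\<close>

definition srw_paths :: "nat \<Rightarrow> (int ^ 'd) list set" where
  "srw_paths N = {xs. length xs = N \<and> set xs \<subseteq> srw_steps}"

definition path_sites :: "nat \<Rightarrow> (int ^ 'd) list \<Rightarrow> (nat \<times> (int ^ 'd)) set" where
  "path_sites N xs = (\<lambda>n. (n, sum_list (take n xs))) ` {1..N}"

definition visited_sites :: "nat \<Rightarrow> (nat \<times> (int ^ 'd)) set" where
  "visited_sites N = (\<Union>xs\<in>srw_paths N. path_sites N xs)"

lemma srw_steps_eq: "srw_steps = range (\<lambda>i. axis i 1) \<union> range (\<lambda>i. axis i (-1))"
  unfolding srw_steps_def by auto

lemma finite_srw_steps: "finite srw_steps"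
  unfolding srw_steps_eq by simp

lemma card_srw_steps_le: "card (srw_steps :: (int ^ 'd) set) \<le> 2 * CARD('d)"
proof -
  have "card (srw_steps :: (int ^ 'd) set) \<le>
      card (range (\<lambda>i::'d. axis i (1::int))) + card (range (\<lambda>i::'d. axis i (-1::int)))"
    unfolding srw_steps_eq by (rule card_Un_le)
  also have "\<dots> \<le> CARD('d) + CARD('d)"
    by (intro add_mono card_image_le) auto
  finally show ?thesis
    by simp
qed

lemma finite_srw_paths: "finite (srw_paths N)"
  unfolding srw_paths_def using finite_lists_length_eq[OF finite_srw_steps] by (simp add: conj_commute)

lemma card_srw_paths_le: "real (card (srw_paths N :: (int ^ 'd) list set)) \<le> (2 * real CARD('d)) ^ N"
proof -
  have "card (srw_paths N :: (int ^ 'd) list set) = card (srw_steps :: (int ^ 'd) set) ^ N"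
    unfolding srw_paths_def using card_lists_length_eq[OF finite_srw_steps] by (simp add: conj_commute)
  also have "\<dots> \<le> (2 * CARD('d)) ^ N"
    by (intro power_mono card_srw_steps_le) auto
  finally show ?thesis
    by (metis of_nat_le_iff of_nat_mult of_nat_numeral of_nat_power)
qed

lemma srw_paths_nonempty: "srw_paths N \<noteq> {}"
proof -
  have "replicate N (axis undefined 1) \<in> srw_paths N"
    unfolding srw_paths_def srw_steps_def by auto
  then show ?thesis
    by auto
qed

lemma finite_visited_sites: "finite (visited_sites N)"
  unfolding visited_sites_def path_sites_def using finite_srw_paths by blast

lemma visited_sites_nonempty: "1 \<le> N \<Longrightarrow> visited_sites N \<noteq> {}"
  unfolding visited_sites_def path_sites_def using srw_paths_nonempty by fastforce

lemma path_sites_subset_visited_sites: "xs \<in> srw_paths N \<Longrightarrow> path_sites N xs \<subseteq> visited_sites N"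
  unfolding visited_sites_def by auto

lemma polymer_Z_eq_sum_srw_paths:
  fixes w :: "nat \<Rightarrow> int ^ 'd \<Rightarrow> real"
  shows "polymer_Z N \<beta> w = (\<Sum>xs\<in>srw_paths N. \<Prod>n\<in>{1..N}. 1 + \<beta> * w n (sum_list (take n xs))) /
    (2 * real CARD('d)) ^ N"
  unfolding polymer_Z_def srw_paths_def ..

lemma polymer_Z_eq_polymer_sum:
  fixes w :: "nat \<Rightarrow> int ^ 'd \<Rightarrow> real"
  assumes w: "\<And>n z. -1 \<le> w n z"
  shows "polymer_Z N \<beta> w = polymer_sum (srw_paths N) (path_sites N) (\<lambda>_. 1 / (2 * real CARD('d)) ^ N)
    (\<lambda>_. \<beta>) (\<lambda>i\<in>visited_sites N. w (fst i) (snd i))"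
proof -
  have "(\<Prod>i\<in>path_sites N xs. 1 + \<beta> * max ((\<lambda>i\<in>visited_sites N. w (fst i) (snd i)) i) (-1)) =
      (\<Prod>n\<in>{1..N}. 1 + \<beta> * w n (sum_list (take n xs)))" if "xs \<in> srw_paths N" for xs
  proof -
    have "inj_on (\<lambda>n. (n, sum_list (take n xs))) {1..N}"
      by (auto intro: inj_onI)
    moreover have "(\<Prod>i\<in>path_sites N xs. 1 + \<beta> * max ((\<lambda>i\<in>visited_sites N. w (fst i) (snd i)) i) (-1)) =
        (\<Prod>i\<in>path_sites N xs. 1 + \<beta> * w (fst i) (snd i))"
      using path_sites_subset_visited_sites[OF that] by (intro prod.cong refl) (auto simp: max_absorb1 w)
    ultimately show ?thesis
      unfolding path_sites_def by (simp add: prod.reindex)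
  qed
  then show ?thesis
    unfolding polymer_Z_eq_sum_srw_paths polymer_sum_def sum_divide_distrib
    by (intro sum.cong refl) simp
qed

lemma ratio_factor_le:
  fixes a b v :: real
  assumes "-1 \<le> v" "0 \<le> a" "a \<le> b" "b < 1"
  shows "(1 - b) / (1 - a) * (1 + a * v) \<le> 1 + b * v"
proof -
  have "(1 + b * v) * (1 - a) - (1 - b) * (1 + a * v) = (b - a) * (1 + v)"
    by (simp add: algebra_simps)
  also have "\<dots> \<ge> 0"
    using assms by simp
  finally show ?thesis
    using assms by (simp add: field_simps)
qed

lemma polymer_Z_ratio_le:
  fixes w :: "nat \<Rightarrow> int ^ 'd \<Rightarrow> real"
  assumes w: "\<And>n z. -1 \<le> w n z" and ab: "0 \<le> a" "a \<le> b" "b < 1"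
  shows "((1 - b) / (1 - a)) ^ N * polymer_Z N a w \<le> polymer_Z N b w"
proof -
  define r where "r = (1 - b) / (1 - a)"
  have factor_nonneg: "0 \<le> 1 + a * w n z" for n z
    using mult_left_mono[OF w[of n z] ab(1)] ab by simp
  have "r ^ N * (\<Sum>xs\<in>srw_paths N. \<Prod>n\<in>{1..N}. 1 + a * w n (sum_list (take n xs))) =
      (\<Sum>xs\<in>srw_paths N. \<Prod>n\<in>{1..N}. r * (1 + a * w n (sum_list (take n xs))))"
    by (simp add: sum_distrib_left prod.distrib)
  also have "\<dots> \<le> (\<Sum>xs\<in>srw_paths N. \<Prod>n\<in>{1..N}. 1 + b * w n (sum_list (take n xs)))"
    unfolding r_def using ab factor_nonneg
    by (intro sum_mono prod_mono conjI mult_nonneg_nonneg ratio_factor_le w) auto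
  finally show ?thesis
    unfolding polymer_Z_eq_sum_srw_paths r_def[symmetric] by (simp add: divide_right_mono)
qed

lemma polymer_Z_ge:
  fixes w :: "nat \<Rightarrow> int ^ 'd \<Rightarrow> real"
  assumes w: "\<And>n z. -1 \<le> w n z" and \<beta>: "0 \<le> \<beta>" "\<beta> < 1"
  shows "(1 - \<beta>) ^ N / (2 * real CARD('d)) ^ N \<le> polymer_Z N \<beta> w"
proof -
  have "0 < card (srw_paths N :: (int ^ 'd) list set)"
    by (intro card_gt_0_iff[THEN iffD2] conjI finite_srw_paths srw_paths_nonempty)
  then have "1 \<le> real (card (srw_paths N :: (int ^ 'd) list set))"
    by linarith
  then have "1 / (2 * real CARD('d)) ^ N \<le> polymer_Z N 0 w"
    unfolding polymer_Z_eq_sum_srw_paths by (simp add: divide_right_mono)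
  then have "(1 - \<beta>) ^ N / (2 * real CARD('d)) ^ N \<le> (1 - \<beta>) ^ N * polymer_Z N 0 w"
    using \<beta> mult_left_mono[of "1 / (2 * real CARD('d)) ^ N" "polymer_Z N 0 w" "(1 - \<beta>) ^ N"]
    by simp
  also have "\<dots> \<le> polymer_Z N \<beta> w"
    using polymer_Z_ratio_le[OF w, of 0 \<beta> N] \<beta> by simp
  finally show ?thesis .
qed


lemma polymer_Z_pos:
  fixes w :: "nat \<Rightarrow> int ^ 'd \<Rightarrow> real"
  assumes "\<And>n z. -1 \<le> w n z" "0 \<le> \<beta>" "\<beta> < 1"
  shows "0 < polymer_Z N \<beta> w"
proof -
  have "0 < (1 - \<beta>) ^ N / (2 * real CARD('d)) ^ N"
    using assms by simp
  also have "\<dots> \<le> polymer_Z N \<beta> w"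
    using assms by (rule polymer_Z_ge)
  finally show ?thesis .
qed

text \<open>Above the level \<open>K\<close>, \<open>ln Z / N\<close> is controlled by \<open>exp (- N K) Z\<close>, whose mean is
  small uniformly in \<open>N\<close>.\<close>
lemma ln_div_le_min_plus_exp:
  fixes Z K :: real
  assumes Z: "0 < Z" and N: "1 \<le> N" and K: "0 \<le> K"
  shows "ln Z / real N \<le> min (ln Z / real N) K + exp (- (real N * K)) * Z"
proof (cases "ln Z / real N \<le> K")
  case False
  define u where "u = ln Z / real N - K"
  have "0 < u"
    using False by (simp add: u_def)
  with N have "u \<le> real N * u"
    by (simp add: mult_le_cancel_right1)
  also have "\<dots> \<le> exp (real N * u)"
    using exp_ge_add_one_self[of "real N * u"] by linarith
  also have "real N * u = ln Z - real N * K"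
    using N by (simp add: u_def field_simps)
  also have "exp (ln Z - real N * K) = exp (- (real N * K)) * Z"
    using Z by (simp add: exp_diff exp_minus field_simps)
  finally show ?thesis
    using False by (simp add: u_def)
qed (use Z in simp)

section \<open>The i.i.d. environment and the free energy\<close>

locale iid_environment =
  fixes M :: "'w measure" and W :: "'w \<Rightarrow> nat \<Rightarrow> int ^ 'd \<Rightarrow> real"
  assumes prob_space_M: "prob_space M"
    and indep: "prob_space.indep_vars M (\<lambda>_. borel) (\<lambda>(n, z) x. W x n z) UNIV"
    and ident: "\<And>n z. distr M borel (\<lambda>x. W x n z) = distr M borel (\<lambda>x. W x 0 0)"
    and lower: "AE x in M. W x 0 0 \<ge> -1"
    and integrable_W: "integrable M (\<lambda>x. W x 0 0)"
    and integral_W: "(\<integral>x. W x 0 0 \<partial>M) = 0"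
begin

definition site_law :: "real measure" where
  "site_law = distr M borel (\<lambda>x. W x 0 0)"

abbreviation sites_law :: "nat \<Rightarrow> (nat \<times> (int ^ 'd) \<Rightarrow> real) measure" where
  "sites_law N \<equiv> PiM (visited_sites N) (\<lambda>_. site_law)"

abbreviation srw_polymer_sum :: "nat \<Rightarrow> real \<Rightarrow> (nat \<times> (int ^ 'd) \<Rightarrow> real) \<Rightarrow> real" where
  "srw_polymer_sum N \<beta> \<equiv>
    polymer_sum (srw_paths N) (path_sites N) (\<lambda>_. 1 / (2 * real CARD('d)) ^ N) (\<lambda>_. \<beta>)"

abbreviation restrict_environment :: "nat \<Rightarrow> 'w \<Rightarrow> nat \<times> (int ^ 'd) \<Rightarrow> real" where
  "restrict_environment N x \<equiv> \<lambda>i\<in>visited_sites N. W x (fst i) (snd i)"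

lemma indep_sites: "prob_space.indep_vars M (\<lambda>_. borel) (\<lambda>i x. W x (fst i) (snd i)) UNIV"
  using indep by (simp add: case_prod_beta')

lemma measurable_W [measurable]: "(\<lambda>x. W x n z) \<in> borel_measurable M"
proof -
  have "(\<lambda>x. W x (fst i) (snd i)) \<in> borel_measurable M" for i
    using indep_sites unfolding prob_space.indep_vars_def[OF prob_space_M] by auto
  from this[of "(n, z)"] show ?thesis
    by simp
qed

lemma AE_environment_ge: "AE x in M. \<forall>n z. -1 \<le> W x n z"
proof -
  have ge: "{v \<in> space borel. -1 \<le> (v :: real)} \<in> sets borel"
    by measurable
  have "AE v in distr M borel (\<lambda>x. W x 0 0). -1 \<le> v"
    using lower AE_distr_iff[OF measurable_W ge] by simp
  then have "AE v in distr M borel (\<lambda>x. W x n z). -1 \<le> v" for n z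
    unfolding ident[of n z] .
  then have "AE x in M. -1 \<le> W x n z" for n z
    using AE_distr_iff[OF measurable_W ge] by simp
  then show ?thesis
    by (simp add: AE_all_countable)
qed

lemma product_polymer_srw:
  "product_polymer site_law (visited_sites N) (srw_paths N) (path_sites N)
    (\<lambda>_. 1 / (2 * real CARD('d)) ^ N)"
proof (rule product_polymer.intro)
  interpret prob_space M
    by (rule prob_space_M)
  show "prob_space site_law"
    unfolding site_law_def by (rule prob_space_distr) simp
  show "integrable site_law (\<lambda>v. max v (-1))"
    unfolding site_law_def using integrable_W by (subst integrable_distr_eq) auto
  have "(\<integral>v. max v (-1) \<partial>site_law) = (\<integral>x. max (W x 0 0) (-1) \<partial>M)"
    unfolding site_law_def by (subst integral_distr) auto
  also have "\<dots> = (\<integral>x. W x 0 0 \<partial>M)"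
    using lower by (intro integral_cong_AE) (auto simp: max_def)
  finally show "(\<integral>v. max v (-1) \<partial>site_law) = 0"
    using integral_W by simp
qed (auto simp: site_law_def finite_visited_sites finite_srw_paths srw_paths_nonempty
    path_sites_subset_visited_sites)

lemma distr_restrict_environment:
  assumes "1 \<le> N"
  shows "distr M (PiM (visited_sites N) (\<lambda>_. borel)) (restrict_environment N) = sites_law N"
proof -
  interpret prob_space M
    by (rule prob_space_M)
  have "distr M (PiM (visited_sites N) (\<lambda>_. borel)) (restrict_environment N) =
      PiM (visited_sites N) (\<lambda>i. distr M borel (\<lambda>x. W x (fst i) (snd i)))"
    using indep_vars_subset[OF indep_sites] visited_sites_nonempty[OF assms]
    by (subst indep_vars_iff_distr_eq_PiM'[symmetric]) auto
  also have "\<dots> = sites_law N"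
    unfolding site_law_def by (intro PiM_cong refl ident)
  finally show ?thesis .
qed

text \<open>Functionals of the partition function only see the environment on the finitely many
  visited sites, whose law is the product law.\<close>
lemma
  fixes f :: "real \<Rightarrow> real"
  assumes N: "1 \<le> N" and f: "f \<in> borel_measurable borel"
  shows integrable_polymer_Z_iff:
      "integrable M (\<lambda>x. f (polymer_Z N \<beta> (W x))) \<longleftrightarrow>
        integrable (sites_law N) (\<lambda>y. f (srw_polymer_sum N \<beta> y))"
    and integral_polymer_Z_eq:
      "(\<integral>x. f (polymer_Z N \<beta> (W x)) \<partial>M) = (\<integral>y. f (srw_polymer_sum N \<beta> y) \<partial>sites_law N)"
proof -
  have restrict_measurable:
      "restrict_environment N \<in> measurable M (PiM (visited_sites N) (\<lambda>_. borel))"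
    by (intro measurable_restrict) simp
  have "srw_polymer_sum N \<beta> \<in> borel_measurable (PiM (visited_sites N) (\<lambda>_. borel))"
    by (intro borel_measurable_polymer_sum[OF _ path_sites_subset_visited_sites]) auto
  then have g_measurable:
      "(\<lambda>y. f (srw_polymer_sum N \<beta> y)) \<in> borel_measurable (PiM (visited_sites N) (\<lambda>_. borel))"
    using f by measurable
  have Z_measurable: "(\<lambda>x. f (polymer_Z N \<beta> (W x))) \<in> borel_measurable M"
    using f unfolding polymer_Z_def by measurable
  have ae: "AE x in M. f (polymer_Z N \<beta> (W x)) = f (srw_polymer_sum N \<beta> (restrict_environment N x))"
    using AE_environment_ge by eventually_elim (simp add: polymer_Z_eq_polymer_sum)
  note transfer = measurable_comp[OF restrict_measurable g_measurable, unfolded comp_def]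
  show "integrable M (\<lambda>x. f (polymer_Z N \<beta> (W x))) \<longleftrightarrow>
      integrable (sites_law N) (\<lambda>y. f (srw_polymer_sum N \<beta> y))"
    using integrable_cong_AE[OF Z_measurable transfer ae]
      integrable_distr_eq[OF restrict_measurable g_measurable]
    by (simp add: distr_restrict_environment[OF N])
  show "(\<integral>x. f (polymer_Z N \<beta> (W x)) \<partial>M) = (\<integral>y. f (srw_polymer_sum N \<beta> y) \<partial>sites_law N)"
    using integral_cong_AE[OF Z_measurable transfer ae]
      integral_distr[OF restrict_measurable g_measurable]
    by (simp add: distr_restrict_environment[OF N])
qed

lemma
  assumes "1 \<le> N"
  shows integrable_polymer_Z: "integrable M (\<lambda>x. polymer_Z N \<beta> (W x))"
    and integral_polymer_Z_le_1: "(\<integral>x. polymer_Z N \<beta> (W x) \<partial>M) \<le> 1"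
proof -
  interpret product_polymer site_law "visited_sites N" "srw_paths N" "path_sites N"
      "\<lambda>_. 1 / (2 * real CARD('d)) ^ N"
    by (rule product_polymer_srw)
  show "integrable M (\<lambda>x. polymer_Z N \<beta> (W x))"
    using integrable_polymer_Z_iff[OF assms, of "\<lambda>z. z"] integrable_polymer_sum by simp
  have "(\<integral>x. polymer_Z N \<beta> (W x) \<partial>M) =
      real (card (srw_paths N :: (int ^ 'd) list set)) / (2 * real CARD('d)) ^ N"
    using integral_polymer_Z_eq[OF assms, of "\<lambda>z. z"] integral_polymer_sum by simp
  also have "\<dots> \<le> 1"
    using card_srw_paths_le[of N] by simp
  finally show "(\<integral>x. polymer_Z N \<beta> (W x) \<partial>M) \<le> 1" .
qed

lemma integrable_ln_polymer_Z:
  assumes "1 \<le> N" "0 \<le> \<beta>" "\<beta> < 1"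
  shows "integrable M (\<lambda>x. ln (polymer_Z N \<beta> (W x)))"
proof -
  interpret product_polymer site_law "visited_sites N" "srw_paths N" "path_sites N"
      "\<lambda>_. 1 / (2 * real CARD('d)) ^ N"
    by (rule product_polymer_srw)
  show ?thesis
    using integrable_polymer_Z_iff[OF assms(1), of ln] integrable_ln_polymer_sum assms by simp
qed

lemma integral_ln_polymer_Z_antimono:
  assumes "1 \<le> N" "0 \<le> a" "a \<le> b" "b < 1"
  shows "(\<integral>x. ln (polymer_Z N b (W x)) \<partial>M) \<le> (\<integral>x. ln (polymer_Z N a (W x)) \<partial>M)"
proof -
  interpret product_polymer site_law "visited_sites N" "srw_paths N" "path_sites N"
      "\<lambda>_. 1 / (2 * real CARD('d)) ^ N"
    by (rule product_polymer_srw)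
  show ?thesis
    using integral_ln_polymer_sum_antimono[OF assms(2-4)]
    by (simp add: integral_polymer_Z_eq[OF assms(1)])
qed

definition finite_free_energy :: "nat \<Rightarrow> real \<Rightarrow> 'w \<Rightarrow> real" where
  "finite_free_energy N \<beta> x = ln (polymer_Z N \<beta> (W x)) / real N"

lemma borel_measurable_finite_free_energy [measurable]:
  "(\<lambda>x. finite_free_energy N \<beta> x) \<in> borel_measurable M"
  unfolding finite_free_energy_def[abs_def] polymer_Z_def by measurable

lemma finite_free_energy_ge:
  assumes w: "\<forall>n z. -1 \<le> W x n z" and \<beta>: "0 \<le> \<beta>" "\<beta> < 1" and N: "1 \<le> N"
  shows "ln (1 - \<beta>) - ln (2 * real CARD('d)) \<le> finite_free_energy N \<beta> x"
proof -
  define D where "D = 2 * real CARD('d)"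
  have D: "0 < D"
    by (simp add: D_def)
  have "real N * (ln (1 - \<beta>) - ln D) = ln ((1 - \<beta>) ^ N / D ^ N)"
    using \<beta> D by (simp add: ln_div ln_realpow algebra_simps)
  also have "\<dots> \<le> ln (polymer_Z N \<beta> (W x))"
  proof (rule ln_mono)
    show "(1 - \<beta>) ^ N / D ^ N \<le> polymer_Z N \<beta> (W x)"
      unfolding D_def using w \<beta> by (intro polymer_Z_ge) auto
    show "0 < (1 - \<beta>) ^ N / D ^ N"
      using \<beta> D by simp
  qed
  finally show ?thesis
    using N by (simp add: finite_free_energy_def D_def field_simps)
qed

lemma finite_free_energy_ratio_ge:
  assumes w: "\<forall>n z. -1 \<le> W x n z" and ab: "0 \<le> a" "a \<le> b" "b < 1" and N: "1 \<le> N"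
  shows "ln ((1 - b) / (1 - a)) + finite_free_energy N a x \<le> finite_free_energy N b x"
proof -
  define r where "r = (1 - b) / (1 - a)"
  have r: "0 < r"
    using ab by (simp add: r_def)
  have Z_pos: "0 < polymer_Z N a (W x)"
    using w ab by (intro polymer_Z_pos) auto
  have "real N * ln r + ln (polymer_Z N a (W x)) = ln (r ^ N * polymer_Z N a (W x))"
    using r Z_pos by (simp add: ln_mult ln_realpow)
  also have "\<dots> \<le> ln (polymer_Z N b (W x))"
  proof (rule ln_mono)
    show "r ^ N * polymer_Z N a (W x) \<le> polymer_Z N b (W x)"
      unfolding r_def using w ab by (intro polymer_Z_ratio_le) auto
    show "0 < r ^ N * polymer_Z N a (W x)"
      using r Z_pos by simp
  qed
  finally have "(real N * ln r + ln (polymer_Z N a (W x))) / real N \<le> ln (polymer_Z N b (W x)) / real N"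
    by (simp add: divide_right_mono)
  then show ?thesis
    using N by (simp add: finite_free_energy_def r_def add_divide_distrib)
qed

text \<open>Truncation at \<open>K\<close> gives domination, since the free energy is bounded below.\<close>
lemma tendsto_integral_truncated_free_energy:
  assumes \<beta>: "0 \<le> \<beta>" "\<beta> < 1"
    and conv: "AE x in M. (\<lambda>N. finite_free_energy N \<beta> x) \<longlonglongrightarrow> q"
  shows "(\<lambda>N. \<integral>x. min (finite_free_energy N \<beta> x) K \<partial>M) \<longlonglongrightarrow> min q K"
proof -
  interpret prob_space M
    by (rule prob_space_M)
  define m where "m = ln (1 - \<beta>) - ln (2 * real CARD('d))"
  have "(\<lambda>N. \<integral>x. min (finite_free_energy N \<beta> x) K \<partial>M) \<longlonglongrightarrow> (\<integral>x. min q K \<partial>M)"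
  proof (rule integral_dominated_convergence[where w = "\<lambda>_. \<bar>m\<bar> + \<bar>K\<bar>"])
    show "AE x in M. (\<lambda>N. min (finite_free_energy N \<beta> x) K) \<longlonglongrightarrow> min q K"
      using conv by eventually_elim (intro tendsto_min tendsto_const)
    show "AE x in M. norm (min (finite_free_energy N \<beta> x) K) \<le> \<bar>m\<bar> + \<bar>K\<bar>" for N
      using AE_environment_ge
    proof eventually_elim
      case (elim x)
      show ?case
      proof (cases "N = 0")
        case False
        then have "m \<le> finite_free_energy N \<beta> x"
          unfolding m_def using finite_free_energy_ge[OF elim \<beta>] by simp
        then show ?thesis
          by (simp add: abs_if min_def)
      qed (simp add: finite_free_energy_def)
    qed
  qed simp_all
  then show ?thesis
    by (simp add: prob_space)
qed

lemma integrable_finite_free_energy: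
  assumes "1 \<le> N" "0 \<le> \<beta>" "\<beta> < 1"
  shows "integrable M (finite_free_energy N \<beta>)"
  unfolding finite_free_energy_def[abs_def] using integrable_ln_polymer_Z[OF assms] by simp

lemma integral_finite_free_energy_le_truncated:
  assumes N: "1 \<le> N" and \<beta>: "0 \<le> \<beta>" "\<beta> < 1" and K: "0 \<le> K"
  shows "(\<integral>x. finite_free_energy N \<beta> x \<partial>M) \<le>
    (\<integral>x. min (finite_free_energy N \<beta> x) K \<partial>M) + exp (- K)"
proof -
  interpret prob_space M
    by (rule prob_space_M)
  let ?F = "finite_free_energy N \<beta>"
  have integrable_F: "integrable M ?F"
    using N \<beta> by (rule integrable_finite_free_energy)
  have "(\<integral>x. ?F x \<partial>M) \<le>
      (\<integral>x. min (?F x) K + exp (- (real N * K)) * polymer_Z N \<beta> (W x) \<partial>M)"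
  proof (rule integral_mono_AE)
    show "integrable M (\<lambda>x. min (?F x) K + exp (- (real N * K)) * polymer_Z N \<beta> (W x))"
      using integrable_F integrable_polymer_Z[OF N] by auto
    show "AE x in M. ?F x \<le> min (?F x) K + exp (- (real N * K)) * polymer_Z N \<beta> (W x)"
      using AE_environment_ge
    proof eventually_elim
      case (elim x)
      then have "0 < polymer_Z N \<beta> (W x)"
        using \<beta> by (intro polymer_Z_pos) auto
      then show ?case
        unfolding finite_free_energy_def using N K by (rule ln_div_le_min_plus_exp)
    qed
  qed (rule integrable_F)
  also have "\<dots> = (\<integral>x. min (?F x) K \<partial>M) + exp (- (real N * K)) * (\<integral>x. polymer_Z N \<beta> (W x) \<partial>M)"
    using integrable_F integrable_polymer_Z[OF N] by simp
  also have "exp (- (real N * K)) * (\<integral>x. polymer_Z N \<beta> (W x) \<partial>M) \<le> exp (- (real N * K))"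
    using integral_polymer_Z_le_1[OF N, of \<beta>] by (simp add: mult_left_le)
  also have "\<dots> \<le> exp (- K)"
    using N K by (simp add: mult_le_cancel_right1)
  finally show ?thesis
    by simp
qed

lemma integral_truncated_free_energy_antimono:
  assumes N: "1 \<le> N" and ab: "0 \<le> a" "a \<le> b" "b < 1" and K: "0 \<le> K"
  shows "(\<integral>x. min (finite_free_energy N b x) K \<partial>M) \<le>
    (\<integral>x. min (finite_free_energy N a x) K \<partial>M) + exp (- K)"
proof -
  interpret prob_space M
    by (rule prob_space_M)
  have "(\<integral>x. min (finite_free_energy N b x) K \<partial>M) \<le> (\<integral>x. finite_free_energy N b x \<partial>M)"
    using integrable_finite_free_energy[OF N, of b] ab by (intro integral_mono) auto
  also have "\<dots> \<le> (\<integral>x. finite_free_energy N a x \<partial>M)"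
    unfolding finite_free_energy_def using integral_ln_polymer_Z_antimono[OF N ab]
    by (simp add: divide_right_mono)
  also have "\<dots> \<le> (\<integral>x. min (finite_free_energy N a x) K \<partial>M) + exp (- K)"
    using N ab K by (intro integral_finite_free_energy_le_truncated) auto
  finally show ?thesis .
qed

lemma free_energy_limit_antimono:
  assumes ab: "0 \<le> a" "a \<le> b" "b < 1"
    and conv_a: "AE x in M. (\<lambda>N. finite_free_energy N a x) \<longlonglongrightarrow> p_a"
    and conv_b: "AE x in M. (\<lambda>N. finite_free_energy N b x) \<longlonglongrightarrow> p_b"
  shows "p_b \<le> p_a"
proof -
  have "p_b \<le> p_a + exp (- K)" if K: "max (max p_a p_b) 0 \<le> K" for K
  proof -
    have "min p_b K \<le> min p_a K + exp (- K)"
    proof (rule LIMSEQ_le)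
      show "(\<lambda>N. \<integral>x. min (finite_free_energy N b x) K \<partial>M) \<longlonglongrightarrow> min p_b K"
        using ab conv_b by (intro tendsto_integral_truncated_free_energy) auto
      show "(\<lambda>N. (\<integral>x. min (finite_free_energy N a x) K \<partial>M) + exp (- K)) \<longlonglongrightarrow> min p_a K + exp (- K)"
        using ab conv_a by (intro tendsto_add tendsto_const tendsto_integral_truncated_free_energy) auto
      show "\<exists>N0. \<forall>N\<ge>N0. (\<integral>x. min (finite_free_energy N b x) K \<partial>M) \<le>
          (\<integral>x. min (finite_free_energy N a x) K \<partial>M) + exp (- K)"
        using ab K by (intro exI[of _ 1] allI impI integral_truncated_free_energy_antimono) auto
    qed
    with K show ?thesis
      by simp
  qed
  note truncated = this
  show ?thesis
  proof (rule field_le_epsilon)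
    fix e :: real assume e: "0 < e"
    define K where "K = max (max (max p_a p_b) 0) (- ln e)"
    have "exp (- K) \<le> exp (ln e)"
      unfolding exp_le_cancel_iff by (simp add: K_def)
    with e truncated[of K] show "p_b \<le> p_a + e"
      by (simp add: K_def)
  qed
qed

lemma free_energy_limit_ratio_ge:
  assumes ab: "0 \<le> a" "a \<le> b" "b < 1"
    and conv_a: "AE x in M. (\<lambda>N. finite_free_energy N a x) \<longlonglongrightarrow> p_a"
    and conv_b: "AE x in M. (\<lambda>N. finite_free_energy N b x) \<longlonglongrightarrow> p_b"
  shows "ln ((1 - b) / (1 - a)) + p_a \<le> p_b"
proof -
  interpret prob_space M
    by (rule prob_space_M)
  have "AE x in M. ln ((1 - b) / (1 - a)) + p_a \<le> p_b"
    using AE_environment_ge conv_a conv_b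
  proof eventually_elim
    case (elim x)
    show ?case
    proof (rule LIMSEQ_le[OF tendsto_add[OF tendsto_const elim(2)] elim(3)])
      show "\<exists>N0. \<forall>N\<ge>N0. ln ((1 - b) / (1 - a)) + finite_free_energy N a x \<le> finite_free_energy N b x"
        using elim(1) ab by (intro exI[of _ 1] allI impI finite_free_energy_ratio_ge) auto
    qed
  qed
  then show ?thesis
    by simp
qed

end


lemma continuous_on_if_dist_le:
  fixes f :: "'a::metric_space \<Rightarrow> 'b::metric_space" and g :: "'a \<Rightarrow> 'c::metric_space"
  assumes "continuous_on S g" and "\<And>x y. x \<in> S \<Longrightarrow> y \<in> S \<Longrightarrow> dist (f y) (f x) \<le> dist (g y) (g x)"
  shows "continuous_on S f"
  unfolding continuous_on_iff
proof (intro ballI allI impI)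
  fix x and e :: real assume "x \<in> S" "0 < e"
  then obtain d where "0 < d" and d: "\<And>y. y \<in> S \<Longrightarrow> dist y x < d \<Longrightarrow> dist (g y) (g x) < e"
    using assms(1) unfolding continuous_on_iff by metis
  show "\<exists>d>0. \<forall>y\<in>S. dist y x < d \<longrightarrow> dist (f y) (f x) < e"
  proof (intro exI conjI ballI impI)
    fix y assume "y \<in> S" "dist y x < d"
    with assms(2)[OF \<open>x \<in> S\<close>] d show "dist (f y) (f x) < e"
      by (blast intro: le_less_trans)
  qed (rule \<open>0 < d\<close>)
qed

theorem theoremA1:
  fixes M :: "'w measure"
    and W :: "'w \<Rightarrow> nat \<Rightarrow> int ^ 'd \<Rightarrow> real"
    and C \<gamma> :: real
    and p :: "real \<Rightarrow> real"
  assumes "prob_space M"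
    and indep: "prob_space.indep_vars M (\<lambda>_. borel) (\<lambda>(n, z) x. W x n z) UNIV"
    and ident: "\<And>n z. distr M borel (\<lambda>x. W x n z) = distr M borel (\<lambda>x. W x 0 0)"
    and lower: "AE x in M. W x 0 0 \<ge> -1"
    and integ: "integrable M (\<lambda>x. W x 0 0)"
    and mean: "(\<integral>x. W x 0 0 \<partial>M) = 0"
    and C_pos: "C > 0"
    and gamma: "1 < \<gamma>" "\<gamma> < 2"
    and tail: "(\<lambda>t. measure M {x \<in> space M. W x 0 0 > t}) \<sim>[at_top] (\<lambda>t. C * t powr (-\<gamma>))"
    and free_energy: "\<And>\<beta>. 0 \<le> \<beta> \<Longrightarrow> \<beta> < 1 \<Longrightarrow>
        AE x in M. (\<lambda>N. ln (polymer_Z N \<beta> (W x)) / real N) \<longlonglongrightarrow> p \<beta>"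
  shows "continuous_on {0..<1} p \<and>
         (\<forall>a b. 0 \<le> a \<and> a \<le> b \<and> b < 1 \<longrightarrow> p b \<le> p a)"
proof -
  interpret iid_environment M W
    using assms(1) indep ident lower integ mean by (rule iid_environment.intro)
  have conv: "AE x in M. (\<lambda>N. finite_free_energy N \<beta> x) \<longlonglongrightarrow> p \<beta>" if "0 \<le> \<beta>" "\<beta> < 1" for \<beta>
    unfolding finite_free_energy_def using that by (rule free_energy)
  have antimono: "p b \<le> p a" if "0 \<le> a" "a \<le> b" "b < 1" for a b
    by (rule free_energy_limit_antimono[OF that conv[of a] conv[of b]]) (use that in auto)
  have increment_le: "p a - p b \<le> ln (1 - a) - ln (1 - b)" if "0 \<le> a" "a \<le> b" "b < 1" for a b
    using that free_energy_limit_ratio_ge[OF that conv[of a] conv[of b]] by (simp add: ln_div)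
  have "continuous_on {0..<1} p"
  proof (rule continuous_on_if_dist_le)
    show "continuous_on {0..<1} (\<lambda>x. ln (1 - x :: real))"
      by (intro continuous_intros) auto
    show "dist (p y) (p x) \<le> dist (ln (1 - y)) (ln (1 - x))" if "x \<in> {0..<1}" "y \<in> {0..<1}" for x y
    proof (cases "x \<le> y")
      case True
      with that antimono[of x y] increment_le[of x y] show ?thesis
        by (simp add: dist_real_def)
    next
      case False
      with that antimono[of y x] increment_le[of y x] show ?thesis
        by (simp add: dist_real_def)
    qed
  qed
  with antimono show ?thesis
    by blast
qed

end
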